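(* For $0<x\le y<1$, $$I(x,y):=\int_0^{\mathrm{arcosh}(1/y)}\frac{dt}{\sqrt{1-x^2\cosh^2t}}\le K\big(\sqrt{1-x^2}\big),$$ with equality only for $x=y$.
   Context: $K(k)=\int_0^{\pi/2}(1-k^2\sin^2\tau)^{-1/2}d\tau$ is the complete elliptic integral of the first kind, $0\le k<1$. *)

theory Defs
  imports "HOL-Analysis.Analysis"
begin

definition ellipK :: "real \<Rightarrow> real" where
  "ellipK k = integral {0..pi/2} (\<lambda>\<tau>. 1 / sqrt (1 - k^2 * (sin \<tau>)^2))"

definition Ixy :: "real \<Rightarrow> real \<Rightarrow> real" where
  "Ixy x y = integral {0..arcosh (1/y)} (\<lambda>t. 1 / sqrt (1 - x^2 * (cosh t)^2))"

end

theory Submission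
  imports Defs
begin

text \<open>With \<open>k = sqrt (1 - x\<^sup>2)\<close>, the substitution
  \<open>sin \<phi> = sqrt (1 - x\<^sup>2 cosh\<^sup>2 t) / k\<close> turns \<open>dt / sqrt (1 - x\<^sup>2 cosh\<^sup>2 t)\<close> into
  \<open>- d\<phi> / sqrt (1 - k\<^sup>2 sin\<^sup>2 \<phi>)\<close> and maps \<open>t = 0\<close> to \<open>\<phi> = \<pi>/2\<close> and
  \<open>t = arcosh (1/y)\<close> to an amplitude \<open>\<phi>\<^sub>y \<ge> 0\<close> that vanishes exactly when \<open>x = y\<close>.
  Hence \<open>I(x,y) = K(k) - F(\<phi>\<^sub>y, k)\<close> with the incomplete elliptic integral \<open>F\<close>, and
  \<open>F(\<phi>, k) \<ge> \<phi>\<close> because the integrand is at least 1.\<close>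

definition ellipF :: "real \<Rightarrow> real \<Rightarrow> real" where
  "ellipF k \<phi> = integral {0..\<phi>} (\<lambda>\<tau>. 1 / sqrt (1 - k^2 * (sin \<tau>)^2))"

lemma ellipK_eq_ellipF: "ellipK k = ellipF k (pi/2)"
  by (simp add: ellipK_def ellipF_def)

lemma ellipF_0 [simp]: "ellipF k 0 = 0"
  by (simp add: ellipF_def)

lemma elliptic_radicand_bounds:
  fixes k \<tau> :: real
  assumes "\<bar>k\<bar> < 1"
  shows "0 < 1 - k^2 * (sin \<tau>)^2" and "1 - k^2 * (sin \<tau>)^2 \<le> 1"
proof -
  have "(sin \<tau>)^2 \<le> 1"
    by (simp add: sin_squared_eq)
  then have "k^2 * (sin \<tau>)^2 \<le> k^2"
    by (simp add: mult_left_le)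
  moreover have "k^2 < 1"
    using assms by (simp add: abs_square_less_1)
  ultimately show "0 < 1 - k^2 * (sin \<tau>)^2" by linarith
  show "1 - k^2 * (sin \<tau>)^2 \<le> 1" by simp
qed

lemma continuous_on_elliptic_integrand:
  assumes "\<bar>k\<bar> < 1"
  shows "continuous_on S (\<lambda>\<tau>. 1 / sqrt (1 - k^2 * (sin \<tau>)^2))"
  using elliptic_radicand_bounds(1)[OF assms]
  by (intro continuous_intros) (auto simp: less_le)

lemma elliptic_integrand_ge_1:
  assumes "\<bar>k\<bar> < 1"
  shows "1 \<le> 1 / sqrt (1 - k^2 * (sin \<tau>)^2)"
  using elliptic_radicand_bounds[OF assms, of \<tau>] by simp

lemma continuous_on_ellipF:
  assumes "\<bar>k\<bar> < 1"
  shows "continuous_on {0..b} (ellipF k)"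
  unfolding ellipF_def
  by (intro indefinite_integral_continuous_1 integrable_continuous_real
      continuous_on_elliptic_integrand assms)

lemma has_real_derivative_ellipF:
  assumes "\<bar>k\<bar> < 1" and "0 < \<phi>"
  shows "(ellipF k has_real_derivative 1 / sqrt (1 - k^2 * (sin \<phi>)^2)) (at \<phi>)"
proof -
  have "(ellipF k has_real_derivative 1 / sqrt (1 - k^2 * (sin \<phi>)^2)) (at \<phi> within {0..\<phi>+1})"
    unfolding ellipF_def
    using assms by (intro integral_has_real_derivative continuous_on_elliptic_integrand) auto
  moreover have "\<phi> \<in> interior {0..\<phi>+1}"
    using assms(2) by simp
  ultimately show ?thesis
    by (metis at_within_interior)
qed

lemma ellipF_ge:
  assumes "\<bar>k\<bar> < 1" and "0 \<le> \<phi>"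
  shows "\<phi> \<le> ellipF k \<phi>"
proof -
  have "((\<lambda>_. 1::real) has_integral \<phi>) {0..\<phi>}"
    using has_integral_const_real[of "1::real" 0 \<phi>] assms(2) by simp
  moreover have "((\<lambda>\<tau>. 1 / sqrt (1 - k^2 * (sin \<tau>)^2)) has_integral ellipF k \<phi>) {0..\<phi>}"
    unfolding ellipF_def
    by (intro integrable_integral integrable_continuous_real continuous_on_elliptic_integrand assms)
  ultimately show ?thesis
    by (rule has_integral_le) (rule elliptic_integrand_ge_1[OF assms(1)])
qed

definition cosh_amplitude :: "real \<Rightarrow> real \<Rightarrow> real" where
  "cosh_amplitude x t = arcsin (sqrt (1 - x^2 * (cosh t)^2) / sqrt (1 - x^2))"

context
  fixes x :: real
  assumes x_pos: "0 < x" and x_less_1: "x < 1"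
begin

lemma sqrt_1_minus_x2_pos: "0 < sqrt (1 - x^2)"
  using x_pos x_less_1 by (simp add: power_less_one_iff)

lemma abs_sqrt_1_minus_x2_less_1: "\<bar>sqrt (1 - x^2)\<bar> < 1"
proof -
  have "0 < x^2" and "x^2 < 1"
    using x_pos x_less_1 by (simp_all add: power_less_one_iff)
  then show ?thesis
    by simp
qed

lemma cosh_amplitude_arg_bounds:
  assumes "x * cosh t \<le> 1"
  shows "0 \<le> sqrt (1 - x^2 * (cosh t)^2) / sqrt (1 - x^2)"
    and "sqrt (1 - x^2 * (cosh t)^2) / sqrt (1 - x^2) \<le> 1"
proof -
  have "(x * cosh t)^2 \<le> 1"
    using assms x_pos by (simp add: power_le_one)
  then show "0 \<le> sqrt (1 - x^2 * (cosh t)^2) / sqrt (1 - x^2)"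
    using sqrt_1_minus_x2_pos by (simp add: power_mult_distrib)
  have "x^2 \<le> (x * cosh t)^2"
    using x_pos cosh_real_ge_1[of t] by (simp add: power_mono)
  then have "sqrt (1 - x^2 * (cosh t)^2) \<le> sqrt (1 - x^2)"
    by (simp add: power_mult_distrib)
  then show "sqrt (1 - x^2 * (cosh t)^2) / sqrt (1 - x^2) \<le> 1"
    using sqrt_1_minus_x2_pos by simp
qed

lemma cosh_amplitude_bounds:
  assumes "x * cosh t \<le> 1"
  shows "0 \<le> cosh_amplitude x t" and "cosh_amplitude x t \<le> pi/2"
  using cosh_amplitude_arg_bounds[OF assms] arcsin_le_mono[of 0] arcsin_bounded
  by (auto simp: cosh_amplitude_def)

lemma cosh_amplitude_pos_iff:
  assumes "x * cosh t \<le> 1"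
  shows "0 < cosh_amplitude x t \<longleftrightarrow> x * cosh t < 1"
proof -
  have "0 < cosh_amplitude x t \<longleftrightarrow> 0 < sqrt (1 - x^2 * (cosh t)^2) / sqrt (1 - x^2)"
    using cosh_amplitude_arg_bounds[OF assms] arcsin_less_mono[of 0]
    by (simp add: cosh_amplitude_def)
  also have "\<dots> \<longleftrightarrow> 0 < 1 - (x * cosh t)^2"
    using sqrt_1_minus_x2_pos by (simp add: zero_less_divide_iff power_mult_distrib)
  also have "\<dots> \<longleftrightarrow> x * cosh t < 1"
    using x_pos by (simp add: power_less_one_iff)
  finally show ?thesis .
qed

lemma cosh_amplitude_0: "cosh_amplitude x 0 = pi/2"
  using sqrt_1_minus_x2_pos by (simp add: cosh_amplitude_def)

lemma elliptic_radicand_cosh_amplitude: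
  assumes "x * cosh t \<le> 1"
  shows "1 - (sqrt (1 - x^2))^2 * (sin (cosh_amplitude x t))^2 = (x * cosh t)^2"
proof -
  have "sin (cosh_amplitude x t) = sqrt (1 - x^2 * (cosh t)^2) / sqrt (1 - x^2)"
    using cosh_amplitude_arg_bounds[OF assms] by (simp add: cosh_amplitude_def sin_arcsin)
  moreover have "(x * cosh t)^2 \<le> 1"
    using assms x_pos by (simp add: power_le_one)
  moreover have "x^2 < 1"
    using x_pos x_less_1 by (simp add: power_less_one_iff)
  ultimately show ?thesis
    by (simp add: power_divide power_mult_distrib)
qed

lemma x_cosh_le_1_on_interval:
  assumes "x * cosh a \<le> 1" and "t \<in> {0..a}"
  shows "x * cosh t \<le> 1"
proof -
  have "cosh t \<le> cosh a"
    using assms(2) by (simp add: cosh_real_nonneg_le_iff)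
  then show ?thesis
    using assms(1) x_pos by (meson mult_left_mono less_imp_le order_trans)
qed

lemma continuous_on_cosh_amplitude:
  assumes "x * cosh a \<le> 1"
  shows "continuous_on {0..a} (cosh_amplitude x)"
proof -
  have "-1 \<le> sqrt (1 - x^2 * (cosh t)^2) / sqrt (1 - x^2)
      \<and> sqrt (1 - x^2 * (cosh t)^2) / sqrt (1 - x^2) \<le> 1" if "t \<in> {0..a}" for t
    using cosh_amplitude_arg_bounds[OF x_cosh_le_1_on_interval[OF assms that]] by linarith
  then show ?thesis
    unfolding cosh_amplitude_def
    using sqrt_1_minus_x2_pos
    by (intro continuous_on_arcsin continuous_intros) auto
qed

lemma has_real_derivative_cosh_amplitude:
  assumes "0 < t" and "x * cosh t < 1"
  shows "(cosh_amplitude x has_real_derivative - x * cosh t / sqrt (1 - x^2 * (cosh t)^2)) (at t)"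
proof -
  define k where "k = sqrt (1 - x^2)"
  define w where "w t = 1 - x^2 * (cosh t)^2" for t
  define u where "u t = sqrt (w t) / k" for t
  have "x^2 < 1"
    using x_pos x_less_1 by (simp add: power_less_one_iff)
  then have k_pos: "0 < k" and k2: "k^2 = 1 - x^2"
    by (simp_all add: k_def)
  have "(x * cosh t)^2 < 1"
    using assms(2) x_pos by (simp add: power_less_one_iff)
  then have w_pos: "0 < w t"
    by (simp add: w_def power_mult_distrib)
  have sinh_pos: "0 < sinh t"
    using assms(1) by simp
  have one_minus_u2: "1 - (u t)^2 = (x * sinh t / k)^2"
    using k2 k_pos w_pos cosh_square_eq[of t]
    by (simp add: u_def w_def field_simps power_mult_distrib)
  have "0 < (x * sinh t / k)^2"
    using x_pos sinh_pos k_pos by simp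
  then have "(u t)^2 < 1"
    using one_minus_u2 by linarith
  then have "\<bar>u t\<bar> < 1"
    by (simp add: abs_square_less_1)
  then have arcsin_deriv: "(arcsin has_real_derivative inverse (sqrt (1 - (u t)^2))) (at (u t))"
    by (intro DERIV_arcsin) (auto simp: abs_less_iff)
  have "(w has_real_derivative - (x^2 * (2 * cosh t * sinh t))) (at t)"
    unfolding w_def by (auto intro!: derivative_eq_intros simp: power2_eq_square)
  then have "(u has_real_derivative inverse (sqrt (w t)) / 2 * - (x^2 * (2 * cosh t * sinh t)) / k) (at t)"
    unfolding u_def by (intro DERIV_cdivide DERIV_chain2[where g = w, OF DERIV_real_sqrt[OF w_pos]])
  then have "((\<lambda>t. arcsin (u t)) has_real_derivative
      inverse (sqrt (1 - (u t)^2)) * (inverse (sqrt (w t)) / 2 * - (x^2 * (2 * cosh t * sinh t)) / k))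
      (at t)"
    by (rule DERIV_chain2[where g = u, OF arcsin_deriv])
  moreover have "cosh_amplitude x = (\<lambda>t. arcsin (u t))"
    by (simp add: fun_eq_iff cosh_amplitude_def u_def w_def k_def)
  moreover have "inverse (sqrt (1 - (u t)^2)) * (inverse (sqrt (w t)) / 2 * - (x^2 * (2 * cosh t * sinh t)) / k)
      = - x * cosh t / sqrt (w t)"
    unfolding one_minus_u2 real_sqrt_abs using x_pos sinh_pos k_pos w_pos
    by (simp add: field_simps power2_eq_square)
  ultimately show ?thesis
    by (simp add: w_def)
qed

lemma integral_cosh_substitution:
  assumes "0 \<le> a" and "x * cosh a \<le> 1"
  shows "integral {0..a} (\<lambda>t. 1 / sqrt (1 - x^2 * (cosh t)^2))
    = ellipK (sqrt (1 - x^2)) - ellipF (sqrt (1 - x^2)) (cosh_amplitude x a)"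
proof -
  define k where "k = sqrt (1 - x^2)"
  define G where "G = (\<lambda>t. - ellipF k (cosh_amplitude x t))"
  have k: "\<bar>k\<bar> < 1"
    unfolding k_def by (rule abs_sqrt_1_minus_x2_less_1)
  have "cosh_amplitude x ` {0..a} \<subseteq> {0..pi/2}"
    using cosh_amplitude_bounds[OF x_cosh_le_1_on_interval[OF assms(2)]] by auto
  then have "continuous_on {0..a} (\<lambda>t. ellipF k (cosh_amplitude x t))"
    by (rule continuous_on_compose2[OF continuous_on_ellipF[OF k] continuous_on_cosh_amplitude[OF assms(2)]])
  then have "continuous_on {0..a} G"
    unfolding G_def by (rule continuous_on_minus)
  moreover have "(G has_real_derivative 1 / sqrt (1 - x^2 * (cosh t)^2)) (at t)"
    if t: "t \<in> {0<..<a}" for t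
  proof -
    have "cosh t < cosh a"
      using t by (simp add: cosh_real_nonneg_less_iff)
    then have "x * cosh t < x * cosh a"
      using x_pos by (rule mult_strict_left_mono)
    then have x_cosh_t: "x * cosh t < 1"
      using assms(2) by linarith
    then have amp_pos: "0 < cosh_amplitude x t"
      by (simp add: cosh_amplitude_pos_iff)
    have "(G has_real_derivative - (1 / sqrt (1 - k^2 * (sin (cosh_amplitude x t))^2)
        * (- x * cosh t / sqrt (1 - x^2 * (cosh t)^2)))) (at t)"
      unfolding G_def
      using t x_cosh_t
      by (intro DERIV_minus DERIV_chain2[where g = "cosh_amplitude x",
          OF has_real_derivative_ellipF[OF k amp_pos]] has_real_derivative_cosh_amplitude) auto
    moreover have "sqrt (1 - k^2 * (sin (cosh_amplitude x t))^2) = x * cosh t"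
      unfolding k_def elliptic_radicand_cosh_amplitude[OF less_imp_le[OF x_cosh_t]]
      using x_pos by simp
    moreover have "0 < x * cosh t"
      using x_pos by simp
    ultimately show ?thesis
      using x_pos by simp
  qed
  ultimately have "((\<lambda>t. 1 / sqrt (1 - x^2 * (cosh t)^2)) has_integral G a - G 0) {0..a}"
    using assms(1)
    by (intro fundamental_theorem_of_calculus_interior)
       (auto simp: has_real_derivative_iff_has_vector_derivative)
  then have "integral {0..a} (\<lambda>t. 1 / sqrt (1 - x^2 * (cosh t)^2)) = G a - G 0"
    by (rule integral_unique)
  then show ?thesis
    by (simp add: G_def k_def cosh_amplitude_0 ellipK_eq_ellipF)
qed

end

theorem lemma6:
  fixes x y :: real
  assumes "0 < x" and "x \<le> y" and "y < 1"
  shows "Ixy x y \<le> ellipK (sqrt (1 - x^2)) \<and> (Ixy x y = ellipK (sqrt (1 - x^2)) \<longleftrightarrow> x = y)"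
proof -
  define k where "k = sqrt (1 - x^2)"
  define a where "a = arcosh (1/y)"
  have x: "0 < x" "x < 1"
    using assms by auto
  have x_cosh_a: "x * cosh a = x / y"
    using assms by (simp add: a_def)
  have a_nonneg: "0 \<le> a"
    using assms by (simp add: a_def)
  have "x * cosh a \<le> 1"
    using assms x_cosh_a by simp
  then have Ixy_eq: "Ixy x y = ellipK k - ellipF k (cosh_amplitude x a)"
    and amp_nonneg: "0 \<le> cosh_amplitude x a"
    and amp_pos_iff: "0 < cosh_amplitude x a \<longleftrightarrow> x < y"
    using integral_cosh_substitution[OF x a_nonneg] cosh_amplitude_bounds[OF x] cosh_amplitude_pos_iff[OF x]
      x_cosh_a assms
    by (simp_all add: Ixy_def k_def a_def[symmetric])
  show ?thesis
  proof (cases "x = y")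
    case True
    then have "cosh_amplitude x a = 0"
      using amp_nonneg amp_pos_iff by simp
    then show ?thesis
      using Ixy_eq True by (simp add: k_def)
  next
    case False
    then have "0 < cosh_amplitude x a"
      using amp_pos_iff assms(2) by simp
    moreover have "cosh_amplitude x a \<le> ellipF k (cosh_amplitude x a)"
      unfolding k_def using abs_sqrt_1_minus_x2_less_1[OF x] amp_nonneg by (rule ellipF_ge)
    ultimately show ?thesis
      using Ixy_eq False by (simp add: k_def)
  qed
qed

end
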